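(* Let $L=\langle S,A,\to\rangle$ be a labelled transition system. For all $x,y\in\{o,b\}$ and $s,t\in S$, if $s\mathrel{\underline{\leftrightarrow}}_{(x,y)}t$ then $s\equiv_{E(x,y)}t$.
   Context: An LTS is $\langle S,A,\to\rangle$ with states $S$, actions $A$ containing the internal action $\tau$, and $\to\subseteq S\times A\times S$; write $s\xrightarrow{a}t$, and $\twoheadrightarrow$ for the reflexive-transitive closure of $\xrightarrow{\tau}$. For $R\subseteq S\times S$ and $s,s',t$: $s\twoheadrightarrow_{o,R,t}s'$ iff $s\twoheadrightarrow s'$; $s\twoheadrightarrow_{b,R,t}s'$ iff $s\twoheadrightarrow s'$, $t\,R\,s$ and $t\,R\,s'$. For $x,y\in\{o,b\}$, a symmetric $R$ is an $(x,y)$-generic bisimulation if whenever $s\,R\,t$ and $s\xrightarrow{a}s'$, either $a=\tau$ and $s'\,R\,t$, or there exist $t',t_1,t_2$ with $t\twoheadrightarrow_{x,R,s}t_1\xrightarrow{a}t_2\twoheadrightarrow_{y,R,s'}t'$ and $s'\,R\,t'$. $s\mathrel{\underline{\leftrightarrow}}_{(x,y)}t$ iff some $(x,y)$-generic bisimulation relates $s$ and $t$. Generic bisimulation game. Let $\frown,\smile$ be formal tags and $E\subseteq\{\frown,\smile\}$. Spoiler-owned configurations $\langle (s,t),c,m,r\rangle_S$ and Duplicator-owned $\langle (s,t),c,m,r\rangle_D$ have $(s,t)\in S\times S$, $c\in (A\times S)\cup\{\dagger\}$, $m\in (S\times\{\frown,\smile\})\cup\{\dagger\}$, $r\in\{*,\checkmark\}$.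 From $\langle (s,t),c,m,r\rangle_S$ Spoiler may: (S1) move to $\langle (s,t),c,m,*\rangle_D$ if $c\neq\dagger$; (S2a) for some $s\xrightarrow{a}s'$, move to $\langle (s,t),(a,s'),(t,\frown),*\rangle_D$ if $c=\dagger$; (S2b) for some $s\xrightarrow{a}s'$, move to $\langle (s,t),(a,s'),(t,\frown),\checkmark\rangle_D$ if $c\neq (a,s')$; (S3) for some $t\xrightarrow{a}t'$, move to $\langle (t,s),(a,t'),(s,\frown),\checkmark\rangle_D$. From $\langle (u,v),(a,u'),(\bar v,f),r\rangle_D$ Duplicator may: (D1) move to $\langle (u',\bar v),\dagger,\dagger,\checkmark\rangle_S$ if $a=\tau$; (D2) if $f=\frown$ and $\bar v\xrightarrow{a}v'$: (a) move to $\langle (u',v'),(a,u'),(v',\smile),*\rangle_S$, or (b) move to $\langle (u',v'),\dagger,\dagger,\checkmark\rangle_S$, or (c) only if $\smile\in E$, move to $\langle (u,v),(a,u'),(v',\smile),*\rangle_S$; (D3) for some $\bar v\xrightarrow{\tau}v'$: (a) move to $\langle (u,v'),(a,u'),(v',f),*\rangle_S$, or (b) only if $f=\smile$, move to $\langle (u',v'),\dagger,\dagger,\checkmark\rangle_S$, or (c) only if $f\in E$, move to $\langle (u,v),(a,u'),(v',f),*\rangle_S$. Duplicator wins a finite play if Spoiler gets stuck, and an infinite play if it has infinitely many $\checkmark$ rewards; other plays are won by Spoiler. $s\equiv_E t$ iff Duplicator has a strategy winning all plays from $\langle (s,t),\dagger,\dagger,*\rangle_S$. $E(x,y)$ is the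 smallest set with $\frown\in E(o,y)$ and $\smile\in E(x,o)$ for all $x,y\in\{o,b\}$. *)

theory Defs
  imports Main
begin

(* An LTS <S,A,->> is given by the state type 's, the action type 'a,
   a distinguished internal action tau :: 'a and a transition predicate
   tr :: 's => 'a => 's => bool  (tr s a t  means  s -a-> t). *)

datatype mode = Mo | Mb

definition taus :: "('s \<Rightarrow> 'a \<Rightarrow> 's \<Rightarrow> bool) \<Rightarrow> 'a \<Rightarrow> 's \<Rightarrow> 's \<Rightarrow> bool" where
  "taus tr tau = (\<lambda>u v. tr u tau v)\<^sup>*\<^sup>*"

(* wtau tr tau x R t s s'  means  s ->>_{x,R,t} s' *)
definition wtau :: "('s \<Rightarrow> 'a \<Rightarrow> 's \<Rightarrow> bool) \<Rightarrow> 'a \<Rightarrow> mode \<Rightarrow> ('s \<Rightarrow> 's \<Rightarrow> bool)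
    \<Rightarrow> 's \<Rightarrow> 's \<Rightarrow> 's \<Rightarrow> bool" where
  "wtau tr tau x R t s s' = (case x of
      Mo \<Rightarrow> taus tr tau s s'
    | Mb \<Rightarrow> taus tr tau s s' \<and> R t s \<and> R t s')"

definition generic_bisim :: "('s \<Rightarrow> 'a \<Rightarrow> 's \<Rightarrow> bool) \<Rightarrow> 'a \<Rightarrow> mode \<Rightarrow> mode
    \<Rightarrow> ('s \<Rightarrow> 's \<Rightarrow> bool) \<Rightarrow> bool" where
  "generic_bisim tr tau x y R \<longleftrightarrow>
     (\<forall>s t. R s t \<longrightarrow> R t s) \<and>
     (\<forall>s t a s'. R s t \<and> tr s a s' \<longrightarrow>
        (a = tau \<and> R s' t) \<or>
        (\<exists>t' t1 t2. wtau tr tau x R s t t1 \<and> tr t1 a t2 \<and> wtau tr tau y R s' t2 t' \<and> R s' t'))"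

definition gbisimilar :: "('s \<Rightarrow> 'a \<Rightarrow> 's \<Rightarrow> bool) \<Rightarrow> 'a \<Rightarrow> mode \<Rightarrow> mode \<Rightarrow> 's \<Rightarrow> 's \<Rightarrow> bool" where
  "gbisimilar tr tau x y s t \<longleftrightarrow> (\<exists>R. generic_bisim tr tau x y R \<and> R s t)"

datatype tag = Frown | Smile
datatype reward = Star | Check

(* None encodes the dagger symbol *)
datatype ('s, 'a) conf =
    SConf "'s \<times> 's" "('a \<times> 's) option" "('s \<times> tag) option" reward
  | DConf "'s \<times> 's" "('a \<times> 's) option" "('s \<times> tag) option" reward

fun is_D :: "('s, 'a) conf \<Rightarrow> bool" where
  "is_D (SConf _ _ _ _) = False"
| "is_D (DConf _ _ _ _) = True"

fun rew :: "('s, 'a) conf \<Rightarrow> reward" where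
  "rew (SConf _ _ _ r) = r"
| "rew (DConf _ _ _ r) = r"

inductive gmove :: "('s \<Rightarrow> 'a \<Rightarrow> 's \<Rightarrow> bool) \<Rightarrow> 'a \<Rightarrow> tag set
    \<Rightarrow> ('s, 'a) conf \<Rightarrow> ('s, 'a) conf \<Rightarrow> bool"
  for tr :: "'s \<Rightarrow> 'a \<Rightarrow> 's \<Rightarrow> bool" and tau :: 'a and E :: "tag set" where
  S1: "c \<noteq> None \<Longrightarrow> gmove tr tau E (SConf (s,t) c m r) (DConf (s,t) c m Star)"
| S2a: "c = None \<Longrightarrow> tr s a s' \<Longrightarrow>
        gmove tr tau E (SConf (s,t) c m r) (DConf (s,t) (Some (a,s')) (Some (t,Frown)) Star)"
| S2b: "c \<noteq> Some (a,s') \<Longrightarrow> tr s a s' \<Longrightarrow>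
        gmove tr tau E (SConf (s,t) c m r) (DConf (s,t) (Some (a,s')) (Some (t,Frown)) Check)"
| S3: "tr t a t' \<Longrightarrow>
        gmove tr tau E (SConf (s,t) c m r) (DConf (t,s) (Some (a,t')) (Some (s,Frown)) Check)"
| D1: "a = tau \<Longrightarrow>
        gmove tr tau E (DConf (u,v) (Some (a,u')) (Some (vb,f)) r) (SConf (u',vb) None None Check)"
| D2a: "f = Frown \<Longrightarrow> tr vb a v' \<Longrightarrow>
        gmove tr tau E (DConf (u,v) (Some (a,u')) (Some (vb,f)) r)
                       (SConf (u',v') (Some (a,u')) (Some (v',Smile)) Star)"
| D2b: "f = Frown \<Longrightarrow> tr vb a v' \<Longrightarrow>
        gmove tr tau E (DConf (u,v) (Some (a,u')) (Some (vb,f)) r) (SConf (u',v') None None Check)"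
| D2c: "f = Frown \<Longrightarrow> tr vb a v' \<Longrightarrow> Smile \<in> E \<Longrightarrow>
        gmove tr tau E (DConf (u,v) (Some (a,u')) (Some (vb,f)) r)
                       (SConf (u,v) (Some (a,u')) (Some (v',Smile)) Star)"
| D3a: "tr vb tau v' \<Longrightarrow>
        gmove tr tau E (DConf (u,v) (Some (a,u')) (Some (vb,f)) r)
                       (SConf (u,v') (Some (a,u')) (Some (v',f)) Star)"
| D3b: "tr vb tau v' \<Longrightarrow> f = Smile \<Longrightarrow>
        gmove tr tau E (DConf (u,v) (Some (a,u')) (Some (vb,f)) r) (SConf (u',v') None None Check)"
| D3c: "tr vb tau v' \<Longrightarrow> f \<in> E \<Longrightarrow>
        gmove tr tau E (DConf (u,v) (Some (a,u')) (Some (vb,f)) r)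
                       (SConf (u,v) (Some (a,u')) (Some (v',f)) Star)"

(* Duplicator strategies are history dependent: a strategy maps a nonempty
   history (list of configurations, current one last) to the next configuration. *)
type_synonym ('s, 'a) strategy = "('s, 'a) conf list \<Rightarrow> ('s, 'a) conf"

definition fin_play :: "('s \<Rightarrow> 'a \<Rightarrow> 's \<Rightarrow> bool) \<Rightarrow> 'a \<Rightarrow> tag set \<Rightarrow> ('s, 'a) strategy
    \<Rightarrow> ('s, 'a) conf \<Rightarrow> ('s, 'a) conf list \<Rightarrow> bool" where
  "fin_play tr tau E \<sigma> g0 xs \<longleftrightarrow> xs \<noteq> [] \<and> hd xs = g0 \<and>
     (\<forall>i. Suc i < length xs \<longrightarrow> gmove tr tau E (xs ! i) (xs ! Suc i)) \<and>
     (\<forall>i. Suc i < length xs \<longrightarrow> is_D (xs ! i) \<longrightarrow> xs ! Suc i = \<sigma> (take (Suc i) xs))"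

definition inf_play :: "('s \<Rightarrow> 'a \<Rightarrow> 's \<Rightarrow> bool) \<Rightarrow> 'a \<Rightarrow> tag set \<Rightarrow> ('s, 'a) strategy
    \<Rightarrow> ('s, 'a) conf \<Rightarrow> (nat \<Rightarrow> ('s, 'a) conf) \<Rightarrow> bool" where
  "inf_play tr tau E \<sigma> g0 p \<longleftrightarrow> p 0 = g0 \<and>
     (\<forall>i. gmove tr tau E (p i) (p (Suc i))) \<and>
     (\<forall>i. is_D (p i) \<longrightarrow> p (Suc i) = \<sigma> (map p [0..<Suc i]))"

definition legal_strategy :: "('s \<Rightarrow> 'a \<Rightarrow> 's \<Rightarrow> bool) \<Rightarrow> 'a \<Rightarrow> tag set \<Rightarrow> ('s, 'a) strategy
    \<Rightarrow> ('s, 'a) conf \<Rightarrow> bool" where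
  "legal_strategy tr tau E \<sigma> g0 \<longleftrightarrow>
     (\<forall>xs. fin_play tr tau E \<sigma> g0 xs \<and> is_D (last xs) \<and> (\<exists>g. gmove tr tau E (last xs) g)
        \<longrightarrow> gmove tr tau E (last xs) (\<sigma> xs))"

definition dup_winning :: "('s \<Rightarrow> 'a \<Rightarrow> 's \<Rightarrow> bool) \<Rightarrow> 'a \<Rightarrow> tag set \<Rightarrow> ('s, 'a) strategy
    \<Rightarrow> ('s, 'a) conf \<Rightarrow> bool" where
  "dup_winning tr tau E \<sigma> g0 \<longleftrightarrow> legal_strategy tr tau E \<sigma> g0 \<and>
     (\<forall>xs. fin_play tr tau E \<sigma> g0 xs \<and> \<not> (\<exists>g. gmove tr tau E (last xs) g) \<longrightarrow> \<not> is_D (last xs)) \<and>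
     (\<forall>p. inf_play tr tau E \<sigma> g0 p \<longrightarrow> infinite {i. rew (p i) = Check})"

definition game_equiv :: "('s \<Rightarrow> 'a \<Rightarrow> 's \<Rightarrow> bool) \<Rightarrow> 'a \<Rightarrow> tag set \<Rightarrow> 's \<Rightarrow> 's \<Rightarrow> bool" where
  "game_equiv tr tau E s t \<longleftrightarrow> (\<exists>\<sigma>. dup_winning tr tau E \<sigma> (SConf (s,t) None None Star))"

definition Exy :: "mode \<Rightarrow> mode \<Rightarrow> tag set" where
  "Exy x y = (if x = Mo then {Frown} else {}) \<union> (if y = Mo then {Smile} else {})"

end

theory Submission
  imports Defs
begin

text \<open>Duplicator plays along the largest \<^emph>\<open>lax\<close> bisimulation, in which a \<open>\<tau>\<close>-step may also be
  answered by a weak \<open>\<tau>\<close>-path; every generic bisimulation is lax, and the largest lax bisimulation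
  is closed under stuttering, which is what the moves D3a of the \<open>(b,y)\<close>-games require.
  A challenge \<open>s \<midarrow>a\<rightarrow> s'\<close> is answered by following, one \<open>\<tau>\<close>-step per round, the path the
  bisimulation promises, first to a state performing the matching \<open>a\<close>-step (the frown phase)
  and, when \<open>y = o\<close>, then to a state related to \<open>s'\<close> (the smile phase); reaching the end
  earns a reward. A play without rewards from some point on has Spoiler repeating the challenge
  (move S1), so the rank (phase, distance to the end of the phase) of Duplicator's configurations
  decreases lexicographically, which cannot go on forever.\<close>

definition lax_step :: "('s \<Rightarrow> 'a \<Rightarrow> 's \<Rightarrow> bool) \<Rightarrow> 'a \<Rightarrow> mode \<Rightarrow> mode
    \<Rightarrow> ('s \<Rightarrow> 's \<Rightarrow> bool) \<Rightarrow> 's \<Rightarrow> 's \<Rightarrow> 'a \<Rightarrow> 's \<Rightarrow> bool" where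
  "lax_step tr tau x y R s t a s' \<longleftrightarrow>
     (a = tau \<and> (\<exists>t'. wtau tr tau x R s t t' \<and> R s' t')) \<or>
     (\<exists>t' t1 t2. wtau tr tau x R s t t1 \<and> tr t1 a t2 \<and> wtau tr tau y R s' t2 t' \<and> R s' t')"

definition lax_bisim :: "('s \<Rightarrow> 'a \<Rightarrow> 's \<Rightarrow> bool) \<Rightarrow> 'a \<Rightarrow> mode \<Rightarrow> mode
    \<Rightarrow> ('s \<Rightarrow> 's \<Rightarrow> bool) \<Rightarrow> bool" where
  "lax_bisim tr tau x y R \<longleftrightarrow> (\<forall>s t. R s t \<longrightarrow> R t s) \<and>
     (\<forall>s t a s'. R s t \<longrightarrow> tr s a s' \<longrightarrow> lax_step tr tau x y R s t a s')"

definition lax_bisimilar :: "('s \<Rightarrow> 'a \<Rightarrow> 's \<Rightarrow> bool) \<Rightarrow> 'a \<Rightarrow> mode \<Rightarrow> mode \<Rightarrow> 's \<Rightarrow> 's \<Rightarrow> bool" where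
  "lax_bisimilar tr tau x y s t \<longleftrightarrow> (\<exists>R. lax_bisim tr tau x y R \<and> R s t)"

lemma lax_bisimD:
  assumes "lax_bisim tr tau x y R" "R s t"
  shows lax_bisim_sym: "R t s"
    and lax_bisim_step: "tr s a s' \<Longrightarrow> lax_step tr tau x y R s t a s'"
  using assms unfolding lax_bisim_def by blast+

lemma taus_refl [simp]: "taus tr tau s s"
  by (simp add: taus_def)

lemma taus_trans: "taus tr tau s t \<Longrightarrow> taus tr tau t u \<Longrightarrow> taus tr tau s u"
  unfolding taus_def by (rule rtranclp_trans)

lemma taus_step: "tr s tau t \<Longrightarrow> taus tr tau s t"
  unfolding taus_def by (rule r_into_rtranclp)

lemma wtau_taus: "wtau tr tau x R t s s' \<Longrightarrow> taus tr tau s s'"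
  by (cases x) (auto simp: wtau_def)

lemma wtau_refl: "R t s \<Longrightarrow> wtau tr tau x R t s s"
  by (cases x) (auto simp: wtau_def)

lemma wtau_mono: "wtau tr tau x R t s s' \<Longrightarrow> R \<le> R' \<Longrightarrow> wtau tr tau x R' t s s'"
  by (cases x) (auto simp: wtau_def)

lemma wtau_prepend:
  "wtau tr tau x R t s' s'' \<Longrightarrow> taus tr tau s s' \<Longrightarrow> R' t s \<Longrightarrow> R \<le> R' \<Longrightarrow> wtau tr tau x R' t s s''"
  by (cases x) (auto simp: wtau_def intro: taus_trans)

lemma lax_step_prepend:
  assumes "lax_step tr tau x y R s t' a s'" "taus tr tau t t'" "R' s t" "R \<le> R'"
  shows "lax_step tr tau x y R' s t a s'"
proof -
  note prepend = wtau_prepend[OF _ assms(2,3,4)] and mono = wtau_mono[OF _ assms(4)]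
    and rel = predicate2D[OF assms(4)]
  from assms(1) show ?thesis
    unfolding lax_step_def by (elim disjE exE conjE) (blast intro: prepend mono rel)+
qed

lemma lax_step_mono:
  "lax_step tr tau x y R s t a s' \<Longrightarrow> R \<le> R' \<Longrightarrow> R' s t \<Longrightarrow> lax_step tr tau x y R' s t a s'"
  by (erule lax_step_prepend) auto

lemma generic_bisim_imp_lax_bisim:
  assumes "generic_bisim tr tau x y R" shows "lax_bisim tr tau x y R"
  unfolding lax_bisim_def
proof (intro conjI allI impI)
  fix s t assume "R s t" then show "R t s" using assms unfolding generic_bisim_def by blast
  fix a s' assume "tr s a s'"
  with \<open>R s t\<close> assms have "(a = tau \<and> R s' t) \<or>
      (\<exists>t' t1 t2. wtau tr tau x R s t t1 \<and> tr t1 a t2 \<and> wtau tr tau y R s' t2 t' \<and> R s' t')"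
    unfolding generic_bisim_def by blast
  moreover have "wtau tr tau x R s t t" using \<open>R s t\<close> by (rule wtau_refl)
  ultimately show "lax_step tr tau x y R s t a s'"
    unfolding lax_step_def by blast
qed

lemma lax_bisim_le_lax_bisimilar:
  assumes "lax_bisim tr tau x y R" shows "R \<le> lax_bisimilar tr tau x y"
proof (rule predicate2I)
  fix s t assume "R s t"
  with assms show "lax_bisimilar tr tau x y s t" unfolding lax_bisimilar_def by blast
qed

lemma lax_bisim_lax_bisimilar: "lax_bisim tr tau x y (lax_bisimilar tr tau x y)"
  unfolding lax_bisim_def
proof (intro conjI allI impI)
  fix s t assume "lax_bisimilar tr tau x y s t"
  then obtain R where R: "lax_bisim tr tau x y R" "R s t" unfolding lax_bisimilar_def by blast
  show "lax_bisimilar tr tau x y t s"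
    using lax_bisim_le_lax_bisimilar[OF R(1)] lax_bisim_sym[OF R] by (rule predicate2D)
  fix a s' assume step: "tr s a s'"
  show "lax_step tr tau x y (lax_bisimilar tr tau x y) s t a s'"
    using lax_bisim_step[OF R step] lax_bisim_le_lax_bisimilar[OF R(1)]
      \<open>lax_bisimilar tr tau x y s t\<close> by (rule lax_step_mono)
qed

lemma lax_step_tau:
  assumes "lax_step tr tau x y R s t tau s'"
  obtains t' where "taus tr tau t t'" "R s' t'"
proof -
  have "\<exists>t'. taus tr tau t t' \<and> R s' t'"
    using assms unfolding lax_step_def
  proof (elim disjE exE conjE)
    fix t1 t2 t' assume "wtau tr tau x R s t t1" "tr t1 tau t2" "wtau tr tau y R s' t2 t'" "R s' t'"
    then show ?thesis by (meson taus_step taus_trans wtau_taus)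
  qed (blast dest: wtau_taus)
  with that show thesis by blast
qed

lemma lax_bisim_simulates_taus:
  assumes "lax_bisim tr tau x y R" "taus tr tau s s'" "R s t"
  obtains t' where "taus tr tau t t'" "R s' t'"
proof -
  have "\<exists>t'. taus tr tau t t' \<and> R s' t'"
    using assms(2,3) unfolding taus_def
  proof (induction rule: rtranclp_induct)
    case (step s' s'')
    then obtain t' where t': "taus tr tau t t'" "R s' t'" by (auto simp: taus_def)
    from lax_bisim_step[OF assms(1) t'(2) step(2)]
    obtain t'' where "taus tr tau t' t''" "R s'' t''" by (rule lax_step_tau)
    with t' show ?case by (auto simp: taus_def elim: rtranclp_trans)
  qed auto
  with that show ?thesis by blast
qed

text \<open>Adding all such intermediate pairs still gives a lax bisimulation: a move from the
  intermediate state is answered by first completing the \<open>\<tau>\<close>-path.\<close>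

lemma lax_bisimilar_stutter:
  assumes "lax_bisimilar tr tau x y u v" "lax_bisimilar tr tau x y u v''"
    and "taus tr tau v v'" "taus tr tau v' v''"
  shows "lax_bisimilar tr tau x y u v'"
proof -
  let ?B = "lax_bisimilar tr tau x y"
  define between where
    "between p q \<longleftrightarrow> (\<exists>q1 q2. ?B p q1 \<and> ?B p q2 \<and> taus tr tau q1 q \<and> taus tr tau q q2)" for p q
  define R where "R p q \<longleftrightarrow> between p q \<or> between q p" for p q
  have B: "lax_bisim tr tau x y ?B" by (rule lax_bisim_lax_bisimilar)
  have B_R: "?B \<le> R"
    unfolding R_def between_def by (auto intro: taus_refl)
  have "lax_bisim tr tau x y R"
    unfolding lax_bisim_def
  proof (intro conjI allI impI)
    fix s t assume "R s t" then show "R t s" unfolding R_def by blast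
  next
    fix s t a s' assume Rst: "R s t" and step: "tr s a s'"
    obtain t0 where t0: "taus tr tau t t0" "?B s t0"
    proof -
      consider "between s t" | "between t s" using Rst unfolding R_def by blast
      then show thesis
      proof cases
        case 1 then show thesis using that unfolding between_def by blast
      next
        case 2
        then obtain q where "?B t q" "taus tr tau q s" unfolding between_def by blast
        from lax_bisim_simulates_taus[OF B this(2) lax_bisim_sym[OF B this(1)]] that
        show thesis by blast
      qed
    qed
    show "lax_step tr tau x y R s t a s'"
      using lax_bisim_step[OF B t0(2) step] t0(1) Rst B_R by (rule lax_step_prepend)
  qed
  moreover have "R u v'"
    using assms unfolding R_def between_def by blast
  ultimately show ?thesis unfolding lax_bisimilar_def by blast
qed

definition dist_to :: "('s \<Rightarrow> 's \<Rightarrow> bool) \<Rightarrow> ('s \<Rightarrow> bool) \<Rightarrow> 's \<Rightarrow> nat" where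
  "dist_to r P v = (LEAST n. \<exists>w. (r ^^ n) v w \<and> P w)"

lemma dist_to_decreases:
  assumes "r\<^sup>*\<^sup>* v w" "P w" "\<not> P v"
  obtains v' w' where "r v v'" "r\<^sup>*\<^sup>* v' w'" "P w'" "dist_to r P v' < dist_to r P v"
proof -
  let ?d = "dist_to r P"
  from rtranclp_imp_relpowp[OF assms(1)] assms(2) have "\<exists>n z. (r ^^ n) v z \<and> P z" by blast
  from LeastI_ex[OF this] obtain z where z: "(r ^^ ?d v) v z" "P z"
    unfolding dist_to_def by blast
  obtain k where k: "?d v = Suc k"
  proof (cases "?d v")
    case 0
    with z assms(3) show thesis by simp
  qed
  from relpowp_Suc_D2[OF z(1)[unfolded k]] obtain v' where v': "r v v'" "(r ^^ k) v' z"
    by blast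
  from v'(2) z(2) have "?d v' \<le> k" unfolding dist_to_def by (blast intro: Least_le)
  with k have "?d v' < ?d v" by simp
  from v'(1) relpowp_imp_rtranclp[OF v'(2)] z(2) this show thesis by (rule that)
qed

lemma rtranclp_last_step:
  assumes "r\<^sup>*\<^sup>* v w" "P w"
  shows "P v \<or> (\<exists>z. r\<^sup>*\<^sup>* v z \<and> (\<exists>w. r z w \<and> P w))"
  using assms by (cases rule: rtranclp.cases) blast+

lemma gmove_alternates: "gmove tr tau E c d \<Longrightarrow> is_D d \<longleftrightarrow> \<not> is_D c"
  by (erule gmove.cases) auto

lemma gmove_pending_Star:
  "gmove tr tau E (SConf p c m r) d \<Longrightarrow> c \<noteq> None \<Longrightarrow> rew d = Star \<Longrightarrow> d = DConf p c m Star"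
  by (erule gmove.cases) auto

locale stuttering_lax_bisim =
  fixes tr :: "'s \<Rightarrow> 'a \<Rightarrow> 's \<Rightarrow> bool" and tau :: 'a and x y :: mode
    and Q :: "'s \<Rightarrow> 's \<Rightarrow> bool"
  assumes lax_bisim: "lax_bisim tr tau x y Q"
    and stutter: "x = Mb \<Longrightarrow> Q u v \<Longrightarrow> Q u v'' \<Longrightarrow> taus tr tau v v' \<Longrightarrow> taus tr tau v' v''
      \<Longrightarrow> Q u v'"
begin

definition reaches :: "('s \<Rightarrow> bool) \<Rightarrow> 's \<Rightarrow> bool" where
  "reaches P v \<longleftrightarrow> (\<exists>w. taus tr tau v w \<and> P w)"

abbreviation tau_dist :: "('s \<Rightarrow> bool) \<Rightarrow> 's \<Rightarrow> nat" where
  "tau_dist \<equiv> dist_to (\<lambda>u v. tr u tau v)"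

lemma reaches_closer:
  assumes "reaches P w" "\<not> P w"
  obtains w' where "tr w tau w'" "reaches P w'" "tau_dist P w' < tau_dist P w"
  using assms dist_to_decreases[where r = "\<lambda>u v. tr u tau v"]
  unfolding reaches_def taus_def by metis

definition smile_exit :: "'s \<Rightarrow> 's \<Rightarrow> bool" where
  "smile_exit u' w \<longleftrightarrow> (\<exists>w'. tr w tau w' \<and> Q u' w')"

text \<open>States from which Duplicator can close the frown phase of the challenge
  \<open>u \<midarrow>a\<rightarrow> u'\<close>: by D1, by D2b, or by D2c, opening a smile phase.\<close>

definition frown_exit :: "'s \<Rightarrow> 'a \<Rightarrow> 's \<Rightarrow> 's \<Rightarrow> bool" where
  "frown_exit u a u' w \<longleftrightarrow> (x = Mb \<longrightarrow> Q u w) \<and>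
     (a = tau \<and> Q u' w \<or> (\<exists>w'. tr w a w' \<and> (Q u' w' \<or> y = Mo \<and> reaches (smile_exit u') w')))"

lemma frown_exit_reachable:
  assumes "Q u v" "tr u a u'"
  shows "reaches (frown_exit u a u') v"
  using lax_bisim_step[OF lax_bisim assms] unfolding lax_step_def
proof (elim disjE exE conjE)
  fix t' assume "a = tau" "wtau tr tau x Q u v t'" "Q u' t'"
  then show ?thesis
    unfolding reaches_def frown_exit_def by (cases x) (auto simp: wtau_def)
next
  fix t' t1 t2
  assume t1: "wtau tr tau x Q u v t1" and t2: "tr t1 a t2" "wtau tr tau y Q u' t2 t'" "Q u' t'"
  have "Q u' t2 \<or> y = Mo \<and> reaches (smile_exit u') t2"
  proof (cases y)
    case Mo
    with t2 show ?thesis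
      using rtranclp_last_step[of "\<lambda>u v. tr u tau v" t2 t' "Q u'"]
      unfolding reaches_def smile_exit_def wtau_def taus_def by auto
  qed (use t2 in \<open>simp add: wtau_def\<close>)
  with t1 t2(1) show ?thesis
    unfolding reaches_def frown_exit_def by (cases x) (auto simp: wtau_def)
qed

text \<open>In branching mode the frown phase walks with D3a, which keeps the walker \<open>w\<close> equal to
  the partner \<open>v\<close> of \<open>u\<close>.\<close>

definition dup_good :: "('s, 'a) conf \<Rightarrow> bool" where
  "dup_good c \<longleftrightarrow> (\<exists>u v a u' w f r. c = DConf (u,v) (Some (a,u')) (Some (w,f)) r \<and> Q u v \<and>
     (f = Frown \<longrightarrow> (x = Mb \<longrightarrow> w = v) \<and> reaches (frown_exit u a u') w) \<and>
     (f = Smile \<longrightarrow> y = Mo \<and> reaches (smile_exit u') w))"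

definition spoiler_good :: "('s, 'a) conf \<Rightarrow> bool" where
  "spoiler_good c \<longleftrightarrow> (\<exists>u v cc m r. c = SConf (u,v) cc m r \<and> Q u v \<and>
     (cc \<noteq> None \<longrightarrow> dup_good (DConf (u,v) cc m Star)))"

lemma dup_good_frown:
  "Q u v \<Longrightarrow> (x = Mb \<longrightarrow> w = v) \<Longrightarrow> reaches (frown_exit u a u') w
    \<Longrightarrow> dup_good (DConf (u,v) (Some (a,u')) (Some (w,Frown)) r)"
  unfolding dup_good_def by blast

lemma dup_good_smile:
  "Q u v \<Longrightarrow> y = Mo \<Longrightarrow> reaches (smile_exit u') w
    \<Longrightarrow> dup_good (DConf (u,v) (Some (a,u')) (Some (w,Smile)) r)"
  unfolding dup_good_def by blast

lemma spoiler_good_step: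
  assumes "spoiler_good c" "gmove tr tau (Exy x y) c d" shows "dup_good d"
proof -
  obtain u v cc m r where c: "c = SConf (u,v) cc m r" "Q u v"
    "cc \<noteq> None \<Longrightarrow> dup_good (DConf (u,v) cc m Star)"
    using assms(1) unfolding spoiler_good_def by blast
  have "Q v u" using c(2) by (rule lax_bisim_sym[OF lax_bisim])
  with assms(2)[unfolded c(1)] c(2,3) show ?thesis
    by (cases rule: gmove.cases) (auto intro: dup_good_frown frown_exit_reachable)
qed

fun rank :: "('s, 'a) conf \<Rightarrow> nat \<times> nat" where
  "rank (DConf (u,v) (Some (a,u')) (Some (w,Frown)) r) = (1, tau_dist (frown_exit u a u') w)"
| "rank (DConf (u,v) (Some (a,u')) (Some (w,Smile)) r) = (0, tau_dist (smile_exit u') w)"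
| "rank _ = (0, 0)"

definition good_answer :: "('s, 'a) conf \<Rightarrow> ('s, 'a) conf \<Rightarrow> bool" where
  "good_answer c d \<longleftrightarrow> gmove tr tau (Exy x y) c d \<and> spoiler_good d \<and>
     (\<forall>p cc m. d = SConf p cc m Star \<longrightarrow>
        cc \<noteq> None \<and> (rank (DConf p cc m Star), rank c) \<in> less_than <*lex*> less_than)"

lemma good_answer_done:
  "gmove tr tau (Exy x y) c (SConf (u,v) None None Check) \<Longrightarrow> Q u v
    \<Longrightarrow> good_answer c (SConf (u,v) None None Check)"
  unfolding good_answer_def spoiler_good_def by blast

lemma good_answer_pending:
  assumes "gmove tr tau (Exy x y) c (SConf (u,v) (Some (a,u')) m Star)"
    and "dup_good (DConf (u,v) (Some (a,u')) m Star)"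
    and "(rank (DConf (u,v) (Some (a,u')) m Star), rank c) \<in> less_than <*lex*> less_than"
  shows "good_answer c (SConf (u,v) (Some (a,u')) m Star)"
  using assms unfolding good_answer_def spoiler_good_def dup_good_def by blast

lemma smile_answer:
  assumes "Q u v" "y = Mo" "reaches (smile_exit u') w"
  shows "\<exists>d. good_answer (DConf (u,v) (Some (a,u')) (Some (w,Smile)) r) d"
proof (cases "smile_exit u' w")
  case True
  then obtain w' where "tr w tau w'" "Q u' w'" unfolding smile_exit_def by blast
  then show ?thesis by (blast intro: good_answer_done gmove.D3b)
next
  case False
  with assms(3) obtain w' where w': "tr w tau w'" "reaches (smile_exit u') w'"
    "tau_dist (smile_exit u') w' < tau_dist (smile_exit u') w" by (rule reaches_closer)
  have "good_answer (DConf (u,v) (Some (a,u')) (Some (w,Smile)) r)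
      (SConf (u,v) (Some (a,u')) (Some (w',Smile)) Star)"
  proof (rule good_answer_pending)
    show "gmove tr tau (Exy x y) (DConf (u,v) (Some (a,u')) (Some (w,Smile)) r)
        (SConf (u,v) (Some (a,u')) (Some (w',Smile)) Star)"
      using w'(1) assms(2) by (intro gmove.D3c) (simp_all add: Exy_def)
    show "dup_good (DConf (u,v) (Some (a,u')) (Some (w',Smile)) Star)"
      using assms(1,2) w'(2) by (rule dup_good_smile)
  qed (use w'(3) in simp)
  then show ?thesis by blast
qed

lemma frown_exit_answer:
  assumes "Q u v" "frown_exit u a u' w"
  shows "\<exists>d. good_answer (DConf (u,v) (Some (a,u')) (Some (w,Frown)) r) d"
proof -
  consider "a = tau" "Q u' w" | w' where "tr w a w'" "Q u' w'"
    | w' where "tr w a w'" "y = Mo" "reaches (smile_exit u') w'"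
    using assms(2) unfolding frown_exit_def by blast
  then show ?thesis
  proof cases
    case 1
    then show ?thesis by (blast intro: good_answer_done gmove.D1)
  next
    case 2
    then show ?thesis by (blast intro: good_answer_done gmove.D2b)
  next
    case 3
    have "good_answer (DConf (u,v) (Some (a,u')) (Some (w,Frown)) r)
        (SConf (u,v) (Some (a,u')) (Some (w',Smile)) Star)"
    proof (rule good_answer_pending)
      show "gmove tr tau (Exy x y) (DConf (u,v) (Some (a,u')) (Some (w,Frown)) r)
          (SConf (u,v) (Some (a,u')) (Some (w',Smile)) Star)"
        using 3 by (intro gmove.D2c) (simp_all add: Exy_def)
      show "dup_good (DConf (u,v) (Some (a,u')) (Some (w',Smile)) Star)"
        using assms(1) 3(2,3) by (rule dup_good_smile)
    qed simp
    then show ?thesis by blast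
  qed
qed

lemma frown_answer:
  assumes "Q u v" "x = Mb \<longrightarrow> w = v" "reaches (frown_exit u a u') w"
  shows "\<exists>d. good_answer (DConf (u,v) (Some (a,u')) (Some (w,Frown)) r) d"
proof (cases "frown_exit u a u' w")
  case True
  with assms(1) show ?thesis by (rule frown_exit_answer)
next
  case False
  let ?c = "DConf (u,v) (Some (a,u')) (Some (w,Frown)) r"
  from assms(3) False obtain w' where w': "tr w tau w'" "reaches (frown_exit u a u') w'"
    "tau_dist (frown_exit u a u') w' < tau_dist (frown_exit u a u') w" by (rule reaches_closer)
  have rank: "(rank (DConf (u,v') (Some (a,u')) (Some (w',Frown)) Star), rank ?c)
      \<in> less_than <*lex*> less_than" for v' using w'(3) by simp
  show ?thesis
  proof (cases x)
    case Mo
    have "good_answer ?c (SConf (u,v) (Some (a,u')) (Some (w',Frown)) Star)"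
    proof (rule good_answer_pending)
      show "gmove tr tau (Exy x y) ?c (SConf (u,v) (Some (a,u')) (Some (w',Frown)) Star)"
        using w'(1) Mo by (intro gmove.D3c) (simp_all add: Exy_def)
      show "dup_good (DConf (u,v) (Some (a,u')) (Some (w',Frown)) Star)"
        using assms(1) w'(2) Mo by (intro dup_good_frown) simp_all
    qed (rule rank)
    then show ?thesis by blast
  next
    case Mb
    txt \<open>Here the path to the frown exit starts at \<open>v\<close> and ends in a state related to \<open>u\<close>,
      so by stuttering the intermediate state \<open>w'\<close> may replace \<open>v\<close>.\<close>
    from w'(2) obtain t where t: "taus tr tau w' t" "frown_exit u a u' t"
      unfolding reaches_def by blast
    have "Q u t" using t(2) Mb unfolding frown_exit_def by simp
    moreover have "taus tr tau v w'" using w'(1) assms(2) Mb by (simp add: taus_step)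
    ultimately have "Q u w'" using stutter[OF Mb assms(1)] t(1) by blast
    have "good_answer ?c (SConf (u,w') (Some (a,u')) (Some (w',Frown)) Star)"
    proof (rule good_answer_pending)
      show "gmove tr tau (Exy x y) ?c (SConf (u,w') (Some (a,u')) (Some (w',Frown)) Star)"
        using w'(1) by (rule gmove.D3a)
      show "dup_good (DConf (u,w') (Some (a,u')) (Some (w',Frown)) Star)"
        using \<open>Q u w'\<close> w'(2) by (intro dup_good_frown) simp_all
    qed (rule rank)
    then show ?thesis by blast
  qed
qed

lemma dup_good_answer:
  assumes "dup_good c" shows "\<exists>d. good_answer c d"
proof -
  obtain u v a u' w f r where c: "c = DConf (u,v) (Some (a,u')) (Some (w,f)) r" "Q u v"
    and frown: "f = Frown \<Longrightarrow> (x = Mb \<longrightarrow> w = v) \<and> reaches (frown_exit u a u') w"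
    and smile: "f = Smile \<Longrightarrow> y = Mo \<and> reaches (smile_exit u') w"
    using assms unfolding dup_good_def by blast
  show ?thesis
  proof (cases f)
    case Frown
    from frown[OF Frown] have "x = Mb \<longrightarrow> w = v" "reaches (frown_exit u a u') w" by simp_all
    from frown_answer[OF c(2) this] show ?thesis unfolding c(1) Frown .
  next
    case Smile
    from smile[OF Smile] have "y = Mo" "reaches (smile_exit u') w" by simp_all
    from smile_answer[OF c(2) this] show ?thesis unfolding c(1) Smile .
  qed
qed

definition answer :: "('s, 'a) conf \<Rightarrow> ('s, 'a) conf" where
  "answer c = (SOME d. good_answer c d)"

lemma good_answer_answer: "dup_good c \<Longrightarrow> good_answer c (answer c)"
  unfolding answer_def by (rule someI_ex) (rule dup_good_answer)

definition strategy :: "('s, 'a) strategy" where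
  "strategy xs = answer (last xs)"

definition good :: "('s, 'a) conf \<Rightarrow> bool" where
  "good c \<longleftrightarrow> spoiler_good c \<or> dup_good c"

lemma good_is_D_dup_good: "good c \<Longrightarrow> is_D c \<Longrightarrow> dup_good c"
  unfolding good_def spoiler_good_def by auto

lemma dup_good_is_D: "dup_good c \<Longrightarrow> is_D c"
  unfolding dup_good_def by auto

lemma good_step:
  assumes "good c" "gmove tr tau (Exy x y) c d" "is_D c \<Longrightarrow> d = answer c"
  shows "good d"
proof (cases "is_D c")
  case True
  with assms have "good_answer c d" by (metis good_is_D_dup_good good_answer_answer)
  then show ?thesis unfolding good_answer_def good_def by blast
next
  case False
  with assms(1) have "spoiler_good c" unfolding good_def using dup_good_is_D by blast
  with assms(2) show ?thesis unfolding good_def by (blast intro: spoiler_good_step)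
qed

lemma fin_play_good:
  assumes "fin_play tr tau (Exy x y) strategy g0 xs" "good g0" "i < length xs"
  shows "good (xs ! i)"
  using assms(3)
proof (induction i)
  case 0
  with assms(1,2) show ?case unfolding fin_play_def by (metis hd_conv_nth)
next
  case (Suc i)
  have "gmove tr tau (Exy x y) (xs ! i) (xs ! Suc i)"
    using assms(1) Suc.prems unfolding fin_play_def by blast
  moreover have "xs ! Suc i = answer (xs ! i)" if "is_D (xs ! i)"
    using assms(1) Suc.prems that
    unfolding fin_play_def strategy_def by (simp add: take_Suc_conv_app_nth)
  ultimately show ?case using Suc by (simp add: good_step)
qed

lemma fin_play_last_good:
  assumes "fin_play tr tau (Exy x y) strategy g0 xs" "good g0"
  shows "good (last xs)"
proof -
  have "xs \<noteq> []" using assms(1) unfolding fin_play_def by blast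
  with fin_play_good[OF assms] show ?thesis by (simp add: last_conv_nth)
qed

lemma inf_play_answer:
  "inf_play tr tau (Exy x y) strategy g0 p \<Longrightarrow> is_D (p i) \<Longrightarrow> p (Suc i) = answer (p i)"
  unfolding inf_play_def strategy_def by simp

lemma inf_play_good:
  assumes "inf_play tr tau (Exy x y) strategy g0 p" "good g0"
  shows "good (p i)"
proof (induction i)
  case 0
  with assms show ?case unfolding inf_play_def by simp
next
  case (Suc i)
  with assms(1) show ?case
    unfolding inf_play_def by (blast intro: good_step inf_play_answer[OF assms(1)])
qed

text \<open>Once all rewards are \<open>Star\<close>, every answer of Duplicator leaves a challenge pending, which
  Spoiler can only repeat (move S1), so two rounds later Duplicator is at a configuration of
  smaller rank.\<close>

lemma inf_play_Star_rank_decreases: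
  assumes play: "inf_play tr tau (Exy x y) strategy g0 p" "good g0"
    and Star: "rew (p (Suc i)) = Star" "rew (p (Suc (Suc i))) = Star" and D: "is_D (p i)"
  shows "is_D (p (Suc (Suc i)))"
    and "(rank (p (Suc (Suc i))), rank (p i)) \<in> less_than <*lex*> less_than"
proof -
  have "dup_good (p i)" using inf_play_good[OF play] D by (rule good_is_D_dup_good)
  then have "good_answer (p i) (p (Suc i))"
    using inf_play_answer[OF play(1) D] by (simp add: good_answer_answer)
  moreover from this obtain s t cc m where pSi: "p (Suc i) = SConf (s,t) cc m Star"
    using Star(1) unfolding good_answer_def spoiler_good_def by auto
  ultimately have cc: "cc \<noteq> None"
    and rank: "(rank (DConf (s,t) cc m Star), rank (p i)) \<in> less_than <*lex*> less_than"
    unfolding good_answer_def by auto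
  have "gmove tr tau (Exy x y) (p (Suc i)) (p (Suc (Suc i)))"
    using play(1) unfolding inf_play_def by blast
  with pSi cc Star(2) have "p (Suc (Suc i)) = DConf (s,t) cc m Star"
    by (simp add: gmove_pending_Star)
  with rank show "is_D (p (Suc (Suc i)))"
    and "(rank (p (Suc (Suc i))), rank (p i)) \<in> less_than <*lex*> less_than" by simp_all
qed

lemma inf_play_infinite_Check:
  assumes play: "inf_play tr tau (Exy x y) strategy g0 p" "good g0"
  shows "infinite {i. rew (p i) = Check}"
proof
  assume "finite {i. rew (p i) = Check}"
  then obtain N where N: "rew (p i) = Star" if "N \<le> i" for i
    by (metis (mono_tags, lifting) finite_nat_set_iff_bounded mem_Collect_eq not_le reward.exhaust)
  have moves: "gmove tr tau (Exy x y) (p i) (p (Suc i))" for i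
    using play(1) unfolding inf_play_def by blast
  obtain i0 where i0: "N \<le> i0" "is_D (p i0)"
  proof (cases "is_D (p N)")
    case False
    with gmove_alternates[OF moves[of N]] that[of "Suc N"] show thesis by simp
  qed (use that in blast)
  define f where "f k = p (i0 + 2 * k)" for k
  have "is_D (f k) \<and> (rank (f (Suc k)), rank (f k)) \<in> less_than <*lex*> less_than" for k
  proof (induction k)
    case 0
    show ?case
      using inf_play_Star_rank_decreases[OF play N N i0(2)] i0 by (simp add: f_def)
  next
    case (Suc k)
    have "is_D (f (Suc k))"
      using inf_play_Star_rank_decreases(1)[OF play N N] Suc.IH i0(1) by (simp add: f_def)
    moreover have "N \<le> i0 + 2 * Suc k" using i0(1) by simp
    ultimately show ?case
      using inf_play_Star_rank_decreases(2)[OF play N N] by (simp add: f_def)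
  qed
  then have "\<forall>k. ((rank \<circ> f) (Suc k), (rank \<circ> f) k) \<in> less_than <*lex*> less_than" by simp
  moreover have "wf (less_than <*lex*> less_than)" by (intro wf_lex_prod wf_less_than)
  ultimately show False unfolding wf_iff_no_infinite_down_chain by blast
qed

theorem strategy_winning:
  assumes "Q s t"
  shows "dup_winning tr tau (Exy x y) strategy (SConf (s,t) None None Star)"
proof -
  let ?g0 = "SConf (s,t) None None Star :: ('s, 'a) conf"
  have g0: "good ?g0" using assms unfolding good_def spoiler_good_def by simp
  have answers: "gmove tr tau (Exy x y) (last xs) (strategy xs)"
    if "fin_play tr tau (Exy x y) strategy ?g0 xs" "is_D (last xs)" for xs
    using good_answer_answer[OF good_is_D_dup_good[OF fin_play_last_good[OF that(1) g0] that(2)]]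
    unfolding good_answer_def strategy_def by blast
  show ?thesis
    unfolding dup_winning_def legal_strategy_def
    using answers inf_play_infinite_Check[OF _ g0] by blast
qed

end

theorem lemma5p5:
  fixes tr :: "'s \<Rightarrow> 'a \<Rightarrow> 's \<Rightarrow> bool" and tau :: 'a
    and x y :: mode and s t :: 's
  assumes "gbisimilar tr tau x y s t"
  shows "game_equiv tr tau (Exy x y) s t"
proof -
  interpret stuttering_lax_bisim tr tau x y "lax_bisimilar tr tau x y"
    by unfold_locales (fact lax_bisim_lax_bisimilar, blast intro: lax_bisimilar_stutter)
  from assms obtain R where "generic_bisim tr tau x y R" "R s t"
    unfolding gbisimilar_def by blast
  then have "lax_bisimilar tr tau x y s t"
    by (blast intro: generic_bisim_imp_lax_bisim lax_bisim_le_lax_bisimilar[THEN predicate2D])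
  then show ?thesis
    unfolding game_equiv_def by (blast intro: strategy_winning)
qed

end
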